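(* Let $X$ be a locally compact Hausdorff space, $\tau$ a topological measure on $X$, and $O\in\mathcal O(X)$. Let $\widehat O=O\cup\{\infty\}$ be the one-point compactification of $O$, so that the open subsets of $\widehat O$ are the open $U\subset O$ and the sets $(O- K)\cup\{\infty\}$ with $K\subset O$ compact, and the compact subsets of $\widehat O$ are the compact $K\subset O$ and the sets $(O- U)\cup\{\infty\}$ with $U\subset O$ open. Define $\widehat\tau_O$ on $\mathcal A(\widehat O)$ by $\widehat\tau_O(U)=\tau(U)$, $\widehat\tau_O(K)=\tau(K)$, $\widehat\tau_O((O- K)\cup\{\infty\})=\tau(O- K)$, $\widehat\tau_O((O- U)\cup\{\infty\})=\tau(O)-\tau(U)$ for $U\subset O$ open and $K\subset O$ compact. Then $\widehat\tau_O$ is a topological measure on $\widehat O$.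
   Context: For a locally compact Hausdorff space $Y$: $\mathcal K(Y)$ is the family of compact subsets, $\mathcal O(Y)$ the family of open subsets with compact closure, $\mathcal A(Y)=\mathcal K(Y)\cup\mathcal O(Y)$ (for compact $Y$, $\mathcal O(Y)$ is all open sets). A topological measure on $Y$ is a function $\tau:\mathcal A(Y)\to[0,\infty)$ such that: (additivity) $\tau(A\cup A')=\tau(A)+\tau(A')$ whenever $A,A'\in\mathcal A(Y)$ are disjoint and $A\cup A'\in\mathcal A(Y)$; (monotonicity) $\tau(A)\le\tau(A')$ for $A\subset A'$ in $\mathcal A(Y)$; (regularity) $\tau(K)=\inf\{\tau(O)\mid O\in\mathcal O(Y),O\supset K\}$ for $K\in\mathcal K(Y)$ and $\tau(O)=\sup\{\tau(K)\mid K\in\mathcal K(Y),K\subset O\}$ for $O\in\mathcal O(Y)$. *)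

theory Defs
  imports "HOL-Analysis.Analysis"
begin

definition tm_K :: "'a topology \<Rightarrow> 'a set set" where
  "tm_K T = {K. compactin T K}"

definition tm_O :: "'a topology \<Rightarrow> 'a set set" where
  "tm_O T = {U. openin T U \<and> compactin T (T closure_of U)}"

definition tm_A :: "'a topology \<Rightarrow> 'a set set" where
  "tm_A T = tm_K T \<union> tm_O T"

definition topological_measure :: "'a topology \<Rightarrow> ('a set \<Rightarrow> real) \<Rightarrow> bool" where
  "topological_measure T \<mu> \<longleftrightarrow>
     (\<forall>A\<in>tm_A T. 0 \<le> \<mu> A) \<and>
     (\<forall>A\<in>tm_A T. \<forall>B\<in>tm_A T. A \<inter> B = {} \<and> A \<union> B \<in> tm_A T \<longrightarrow> \<mu> (A \<union> B) = \<mu> A + \<mu> B) \<and>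
     (\<forall>A\<in>tm_A T. \<forall>B\<in>tm_A T. A \<subseteq> B \<longrightarrow> \<mu> A \<le> \<mu> B) \<and>
     (\<forall>K\<in>tm_K T. \<mu> K = Inf (\<mu> ` {U \<in> tm_O T. K \<subseteq> U})) \<and>
     (\<forall>U\<in>tm_O T. \<mu> U = Sup (\<mu> ` {K \<in> tm_K T. K \<subseteq> U}))"

text \<open>One-point compactification of the open set W of X, carried by the type 'a option,
  with None playing the role of the point at infinity and Some the embedding of W.\<close>
definition opc_open :: "'a topology \<Rightarrow> 'a set \<Rightarrow> 'a option set \<Rightarrow> bool" where
  "opc_open X W A \<longleftrightarrow>
     (\<exists>U. openin X U \<and> U \<subseteq> W \<and> A = Some ` U) \<or>
     (\<exists>K. compactin X K \<and> K \<subseteq> W \<and> A = Some ` (W - K) \<union> {None})"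

definition opc :: "'a topology \<Rightarrow> 'a set \<Rightarrow> 'a option topology" where
  "opc X W = topology (opc_open X W)"

definition tau_hat :: "'a topology \<Rightarrow> 'a set \<Rightarrow> ('a set \<Rightarrow> real) \<Rightarrow> 'a option set \<Rightarrow> real" where
  "tau_hat X W \<tau> A =
     (if None \<in> A then
        (if openin (opc X W) A then \<tau> (Some -` A) else \<tau> W - \<tau> (W - Some -` A))
      else \<tau> (Some -` A))"

end

theory Submission
  imports Defs
begin

text \<open>
  For \<open>W\<close> open in the locally compact Hausdorff space \<open>X\<close>, the space \<open>opc X W\<close>
  is precisely the Alexandroff (one-point) compactification of the subspace \<open>W\<close>, as constructed
  in HOL-Analysis; hence it is compact and Hausdorff, so its compact sets are its closed sets and
  every open set has compact closure.  Its open sets are \<open>Some ` U\<close> and \<open>{\<infinity>} \<union> Some ` (W - K)\<close>, its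
  closed sets are \<open>Some ` K\<close> and \<open>{\<infinity>} \<union> Some ` (W - U)\<close>, for \<open>U \<subseteq> W\<close> open and \<open>K \<subseteq> W\<close> compact
  (the point at infinity \<open>\<infinity>\<close> is \<open>None\<close>).  On all these sets \<open>tau_hat\<close> agrees with the uniform
  formula \<open>tau_ext A = \<tau> W - \<tau> (W - A')\<close> if \<open>\<infinity> \<in> A\<close> and \<open>\<tau> A'\<close> otherwise, where
  \<open>A' = Some -` A\<close> is the finite part of \<open>A\<close>, because
  \<open>\<tau> (W - K) = \<tau> W - \<tau> K\<close> for compact \<open>K \<subseteq> W\<close>.  The axioms for \<open>tau_ext\<close> then reduce to
  those of \<open>\<tau>\<close> on the "admissible" subsets of \<open>W\<close> (open or compact): monotonicity across the two
  kinds of sets needs \<open>\<tau> C + \<tau> D \<le> \<tau> W\<close> for disjoint admissible \<open>C, D\<close>, and regularity follows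
  from the outer approximation of compact sets and inner approximation of open sets by \<open>\<tau>\<close>,
  taking complements in \<open>W\<close> for the sets containing \<open>\<infinity>\<close>.
  The file first collects general facts, then works in a locale fixing \<open>X, \<tau>, W\<close>.
\<close>

lemma real_Inf_eq_approx:
  fixes a :: real
  assumes "S \<noteq> {}" and "\<And>x. x \<in> S \<Longrightarrow> a \<le> x" and "\<And>e. e > 0 \<Longrightarrow> \<exists>x\<in>S. x < a + e"
  shows "Inf S = a"
proof (rule cInf_eq_non_empty[OF assms(1,2)])
  fix y assume lower: "\<And>x. x \<in> S \<Longrightarrow> y \<le> x"
  show "y \<le> a"
  proof (rule field_le_epsilon)
    fix e :: real assume "e > 0"
    with assms(3) lower show "y \<le> a + e" by force
  qed
qed

lemma real_Sup_eq_approx: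
  fixes a :: real
  assumes "S \<noteq> {}" and "\<And>x. x \<in> S \<Longrightarrow> x \<le> a" and "\<And>e. e > 0 \<Longrightarrow> \<exists>x\<in>S. a - e < x"
  shows "Sup S = a"
proof (rule cSup_eq_non_empty[OF assms(1,2)])
  fix y assume upper: "\<And>x. x \<in> S \<Longrightarrow> x \<le> y"
  show "a \<le> y"
  proof (rule field_le_epsilon)
    fix e :: real assume "e > 0"
    with assms(3) upper show "a \<le> y + e" by force
  qed
qed

lemma topological_measure_cong:
  assumes "topological_measure T f" and "\<And>A. A \<in> tm_A T \<Longrightarrow> g A = f A"
  shows "topological_measure T g"
proof -
  have "g ` {U \<in> tm_O T. K \<subseteq> U} = f ` {U \<in> tm_O T. K \<subseteq> U}"
    and "g ` {K \<in> tm_K T. K \<subseteq> U} = f ` {K \<in> tm_K T. K \<subseteq> U}" for K U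
    using assms(2) by (auto simp: tm_A_def intro!: image_cong)
  with assms show ?thesis
    unfolding topological_measure_def by (auto simp: tm_A_def)
qed

lemma Some_vimage_insert_None: "Some -` insert None (Some ` B) = B"
  by auto

text \<open>The compactification \<open>opc X W\<close> of the definitions is the library's Alexandroff
  compactification of the subspace \<open>W\<close>; compact subsets of \<open>W\<close> are automatically closed in
  \<open>W\<close> since \<open>X\<close> is Hausdorff.\<close>

lemma opc_open_eq_Alexandroff_open:
  assumes H: "Hausdorff_space X" and W: "openin X W"
  shows "opc_open X W = Alexandroff_open (subtopology X W)"
proof
  fix A
  have top: "topspace (subtopology X W) = W"
    using openin_subset[OF W] by auto
  have closed: "closedin (subtopology X W) K" if "compactin X K" "K \<subseteq> W" for K
    using that H by (simp add: compactin_imp_closedin Hausdorff_space_subtopology compactin_subtopology)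
  show "opc_open X W A = Alexandroff_open (subtopology X W) A"
    unfolding opc_open_def Alexandroff_open_iff top openin_open_subtopology[OF W] compactin_subtopology
    using closed by auto
qed

lemma opc_eq_Alexandroff_compactification:
  assumes "Hausdorff_space X" and "openin X W"
  shows "opc X W = Alexandroff_compactification (subtopology X W)"
  using opc_open_eq_Alexandroff_open[OF assms]
  by (simp add: opc_def Alexandroff_compactification_def)

lemma tm_K_compact_Hausdorff:
  assumes "compact_space T" and "Hausdorff_space T"
  shows "tm_K T = {A. closedin T A}"
  using assms compactin_imp_closedin closedin_compact_space by (auto simp: tm_K_def)

lemma tm_O_compact_space:
  assumes "compact_space T"
  shows "tm_O T = {A. openin T A}"
  using closedin_compact_space[OF assms closedin_closure_of] by (auto simp: tm_O_def)

locale measure_on_open_set =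
  fixes X :: "'a topology" and \<tau> :: "'a set \<Rightarrow> real" and W :: "'a set"
  assumes Hausdorff: "Hausdorff_space X" and loc_compact: "locally_compact_space X"
    and measure: "topological_measure X \<tau>" and W_tm_O: "W \<in> tm_O X"
begin

lemma W_open: "openin X W"
  using W_tm_O by (simp add: tm_O_def)

abbreviation W_hat :: "'a option topology" where
  "W_hat \<equiv> opc X W"

lemma W_hat_eq: "W_hat = Alexandroff_compactification (subtopology X W)"
  using Hausdorff W_open by (rule opc_eq_Alexandroff_compactification)

lemma topspace_subtopology_W: "topspace (subtopology X W) = W"
  using openin_subset[OF W_open] by auto

lemma compact_closed_subtopology_W:
  "compactin (subtopology X W) K \<and> closedin (subtopology X W) K \<longleftrightarrow> compactin X K \<and> K \<subseteq> W"
  using Hausdorff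
  by (auto simp: compactin_subtopology compactin_imp_closedin Hausdorff_space_subtopology)

lemma openin_W_hat:
  "openin W_hat A \<longleftrightarrow>
     (\<exists>U. openin X U \<and> U \<subseteq> W \<and> A = Some ` U) \<or>
     (\<exists>K. compactin X K \<and> K \<subseteq> W \<and> A = insert None (Some ` (W - K)))"
  unfolding W_hat_eq openin_Alexandroff_compactification openin_open_subtopology[OF W_open]
    topspace_subtopology_W conj_assoc[symmetric] compact_closed_subtopology_W
  by (simp only: conj_assoc)

lemma closedin_W_hat:
  "closedin W_hat A \<longleftrightarrow>
     (\<exists>K. compactin X K \<and> K \<subseteq> W \<and> A = Some ` K) \<or>
     (\<exists>U. openin X U \<and> U \<subseteq> W \<and> A = insert None (Some ` (W - U)))"
proof -
  have "insert None (Some ` W) - Some ` U = insert None (Some ` (W - U))" for U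
    by auto
  then show ?thesis
    unfolding W_hat_eq closedin_Alexandroff_compactification openin_open_subtopology[OF W_open]
      topspace_Alexandroff_compactification topspace_subtopology_W conj_assoc[symmetric]
      compact_closed_subtopology_W
    by (simp only: conj_assoc)
qed

text \<open>\<open>W_hat\<close> is compact Hausdorff (using local compactness of the open subspace \<open>W\<close>), so
  \<open>tm_K W_hat\<close> and \<open>tm_O W_hat\<close> consist of the closed and the open sets.\<close>

lemma compact_W_hat: "compact_space W_hat"
  by (simp add: W_hat_eq)

lemma Hausdorff_W_hat: "Hausdorff_space W_hat"
  unfolding W_hat_eq Hausdorff_space_Alexandroff_compactification
  using Hausdorff loc_compact W_open
  by (simp add: Hausdorff_space_subtopology locally_compact_space_open_subset)

lemma tm_K_W_hat: "A \<in> tm_K W_hat \<longleftrightarrow> closedin W_hat A"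
  using tm_K_compact_Hausdorff[OF compact_W_hat Hausdorff_W_hat] by simp

lemma tm_O_W_hat: "A \<in> tm_O W_hat \<longleftrightarrow> openin W_hat A"
  using tm_O_compact_space[OF compact_W_hat] by simp

definition admissible :: "'a set \<Rightarrow> bool" where
  "admissible C \<longleftrightarrow> C \<subseteq> W \<and> (openin X C \<or> compactin X C)"

lemma tm_A_W_hat_core:
  assumes "A \<in> tm_A W_hat"
  shows "None \<notin> A \<Longrightarrow> admissible (Some -` A)" and "None \<in> A \<Longrightarrow> admissible (W - Some -` A)"
proof -
  have "openin W_hat A \<or> closedin W_hat A"
    using assms by (auto simp: tm_A_def tm_K_W_hat tm_O_W_hat)
  then have "(\<exists>U. admissible U \<and> A = Some ` U) \<or> (\<exists>U. admissible U \<and> A = insert None (Some ` (W - U)))"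
    unfolding openin_W_hat closedin_W_hat admissible_def by blast
  moreover have "W - (W - U) = U" if "admissible U" for U
    using that by (auto simp: admissible_def)
  ultimately show "None \<notin> A \<Longrightarrow> admissible (Some -` A)" and "None \<in> A \<Longrightarrow> admissible (W - Some -` A)"
    by (auto simp: inj_vimage_image_eq Some_vimage_insert_None)
qed

lemmas measure_axioms = measure[unfolded topological_measure_def]

lemma tau_nonneg: "C \<in> tm_A X \<Longrightarrow> 0 \<le> \<tau> C"
  using measure_axioms by simp

lemma tau_add:
  "C \<in> tm_A X \<Longrightarrow> D \<in> tm_A X \<Longrightarrow> C \<inter> D = {} \<Longrightarrow> C \<union> D \<in> tm_A X \<Longrightarrow>
    \<tau> (C \<union> D) = \<tau> C + \<tau> D"
  using measure_axioms by simp

lemma tau_mono: "C \<in> tm_A X \<Longrightarrow> D \<in> tm_A X \<Longrightarrow> C \<subseteq> D \<Longrightarrow> \<tau> C \<le> \<tau> D"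
  using measure_axioms by simp

lemma tau_regular_K: "K \<in> tm_K X \<Longrightarrow> \<tau> K = Inf (\<tau> ` {U \<in> tm_O X. K \<subseteq> U})"
  using measure_axioms by simp

lemma tau_regular_O: "U \<in> tm_O X \<Longrightarrow> \<tau> U = Sup (\<tau> ` {K \<in> tm_K X. K \<subseteq> U})"
  using measure_axioms by simp

text \<open>Open subsets of \<open>W\<close> have compact closure, as \<open>W\<close> does.\<close>

lemma open_subset_tm_O: "openin X U \<Longrightarrow> U \<subseteq> W \<Longrightarrow> U \<in> tm_O X"
  using W_tm_O closure_of_mono closed_compactin closedin_closure_of
  unfolding tm_O_def by (metis (no_types, lifting) mem_Collect_eq)

lemma admissible_tm_A: "admissible C \<Longrightarrow> C \<in> tm_A X"
  using open_subset_tm_O by (auto simp: admissible_def tm_A_def tm_K_def)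

lemma admissible_W: "admissible W"
  using W_open by (simp add: admissible_def)

lemma admissible_complement: "compactin X K \<Longrightarrow> admissible (W - K)"
  using Hausdorff W_open by (simp add: admissible_def compactin_imp_closedin openin_diff)

text \<open>Additivity of \<tau> on \<open>W = (W - K) \<union> K\<close>; this makes \<open>tau_hat\<close> agree with \<open>tau_ext\<close>.\<close>

lemma tau_complement:
  assumes "compactin X K" and "K \<subseteq> W"
  shows "\<tau> (W - K) = \<tau> W - \<tau> K"
proof -
  have "\<tau> ((W - K) \<union> K) = \<tau> (W - K) + \<tau> K"
    using assms admissible_complement admissible_W
    by (intro tau_add admissible_tm_A) (auto simp: admissible_def Un_absorb2)
  with assms(2) show ?thesis by (simp add: Un_absorb2)
qed

text \<open>Disjoint admissible sets have total measure at most \<open>\<tau> W\<close>: if one of them is compact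
  the other lies in its complement in \<open>W\<close>, otherwise their union is admissible.\<close>

lemma tau_disjoint_le:
  assumes C: "admissible C" and D: "admissible D" and disj: "C \<inter> D = {}"
  shows "\<tau> C + \<tau> D \<le> \<tau> W"
proof -
  have compact_case: "\<tau> K + \<tau> E \<le> \<tau> W"
    if "compactin X K" "K \<subseteq> W" "admissible E" "K \<inter> E = {}" for K E
  proof -
    have "\<tau> E \<le> \<tau> (W - K)"
      using that admissible_complement
      by (intro tau_mono admissible_tm_A) (auto simp: admissible_def)
    with tau_complement[OF that(1,2)] show ?thesis by simp
  qed
  consider "compactin X C" | "compactin X D" | "openin X C" "openin X D"
    using C D by (auto simp: admissible_def)
  then show ?thesis
  proof cases
    case 1 then show ?thesis using compact_case C D disj by (auto simp: admissible_def)
  next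
    case 2
    then have "\<tau> D + \<tau> C \<le> \<tau> W"
      using compact_case[of D C] C D disj by (auto simp: admissible_def)
    then show ?thesis by simp
  next
    case 3
    then have CD: "admissible (C \<union> D)" using C D by (auto simp: admissible_def)
    have "\<tau> (C \<union> D) = \<tau> C + \<tau> D"
      using C D CD disj by (intro tau_add admissible_tm_A)
    moreover have "\<tau> (C \<union> D) \<le> \<tau> W"
      using CD admissible_W by (intro tau_mono admissible_tm_A) (auto simp: admissible_def)
    ultimately show ?thesis by simp
  qed
qed

lemma approx_by_open_above:
  assumes K: "compactin X K" "K \<subseteq> W" and e: "e > 0"
  obtains U where "openin X U" "K \<subseteq> U" "U \<subseteq> W" "\<tau> U < \<tau> K + e"
proof -
  let ?S = "\<tau> ` {U \<in> tm_O X. K \<subseteq> U}"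
  have "?S \<noteq> {}" using W_tm_O K(2) by blast
  moreover have "bdd_below ?S"
    using tau_nonneg by (auto simp: bdd_below_def tm_A_def)
  moreover have "Inf ?S < \<tau> K + e"
    using tau_regular_K K(1) e by (simp add: tm_K_def)
  ultimately obtain U where U: "U \<in> tm_O X" "K \<subseteq> U" "\<tau> U < \<tau> K + e"
    by (auto simp: cInf_less_iff)
  have UW: "openin X (U \<inter> W)"
    using U(1) W_open by (auto simp: tm_O_def)
  have "\<tau> (U \<inter> W) \<le> \<tau> U"
    using UW U(1) admissible_tm_A[of "U \<inter> W"]
    by (intro tau_mono) (auto simp: admissible_def tm_A_def)
  with U K(2) UW show ?thesis
    by (intro that[of "U \<inter> W"]) auto
qed

lemma approx_by_compact_below:
  assumes U: "openin X U" "U \<subseteq> W" and e: "e > 0"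
  obtains K where "compactin X K" "K \<subseteq> U" "\<tau> U - e < \<tau> K"
proof -
  let ?S = "\<tau> ` {K \<in> tm_K X. K \<subseteq> U}"
  have UO: "U \<in> tm_O X" using open_subset_tm_O U by blast
  have "?S \<noteq> {}" by (auto simp: tm_K_def)
  moreover have "bdd_above ?S"
    using tau_mono UO by (auto simp: bdd_above_def tm_A_def)
  moreover have "\<tau> U - e < Sup ?S"
    using tau_regular_O[OF UO] e by simp
  ultimately show ?thesis
    using that by (auto simp: less_cSup_iff tm_K_def)
qed

definition tau_ext :: "'a option set \<Rightarrow> real" where
  "tau_ext A = (if None \<in> A then \<tau> W - \<tau> (W - Some -` A) else \<tau> (Some -` A))"

lemma tau_ext_Some: "tau_ext (Some ` U) = \<tau> U"
  by (simp add: tau_ext_def inj_vimage_image_eq)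

lemma tau_ext_None: "U \<subseteq> W \<Longrightarrow> tau_ext (insert None (Some ` (W - U))) = \<tau> W - \<tau> U"
  by (simp add: tau_ext_def Some_vimage_insert_None double_diff)

text \<open>The two formulas disagree only on open sets containing infinity, where they agree by
  \<open>tau_complement\<close>.\<close>

lemma tau_hat_eq_tau_ext:
  assumes "A \<in> tm_A W_hat"
  shows "tau_hat X W \<tau> A = tau_ext A"
proof (cases "None \<in> A \<and> openin W_hat A")
  case True
  then obtain K where K: "compactin X K" "K \<subseteq> W" and A: "A = insert None (Some ` (W - K))"
    unfolding openin_W_hat by auto
  then have "tau_hat X W \<tau> A = \<tau> (W - K)"
    using True by (simp add: tau_hat_def Some_vimage_insert_None)
  also have "\<dots> = tau_ext A"
    using tau_complement[OF K] tau_ext_None[OF K(2)] A by simp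
  finally show ?thesis .
next
  case False
  then show ?thesis by (auto simp: tau_hat_def tau_ext_def)
qed

lemma tau_ext_nonneg:
  assumes "A \<in> tm_A W_hat"
  shows "0 \<le> tau_ext A"
proof (cases "None \<in> A")
  case True
  then have "\<tau> (W - Some -` A) \<le> \<tau> W"
    using tm_A_W_hat_core[OF assms] admissible_W
    by (intro tau_mono admissible_tm_A) auto
  with True show ?thesis by (simp add: tau_ext_def)
next
  case False
  then show ?thesis
    using tm_A_W_hat_core[OF assms] by (simp add: tau_ext_def tau_nonneg admissible_tm_A)
qed

text \<open>Additivity when exactly one of the two sets contains the point at infinity: with
  \<open>a, b\<close> the finite parts, \<open>W - a\<close> splits into the admissible sets \<open>W - (a \<union> b)\<close> and \<open>b\<close>.\<close>
lemma tau_ext_add_infinite: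
  assumes A: "A \<in> tm_A W_hat" and B: "B \<in> tm_A W_hat" and AB: "A \<union> B \<in> tm_A W_hat"
    and inA: "None \<in> A" and disj: "A \<inter> B = {}"
  shows "tau_ext (A \<union> B) = tau_ext A + tau_ext B"
proof -
  define a b where "a = Some -` A" and "b = Some -` B"
  have inB: "None \<notin> B" using inA disj by blast
  have adm_b: "admissible b" using tm_A_W_hat_core(1)[OF B inB] by (simp add: b_def)
  have adm_ab: "admissible (W - (a \<union> b))"
    using tm_A_W_hat_core(2)[OF AB] inA by (simp add: a_def b_def vimage_Un)
  have "W - a = (W - (a \<union> b)) \<union> b" and "(W - (a \<union> b)) \<inter> b = {}"
    using adm_b disj by (auto simp: admissible_def a_def b_def)
  moreover have "admissible (W - a)" using tm_A_W_hat_core(2)[OF A inA] by (simp add: a_def)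
  ultimately have "\<tau> (W - a) = \<tau> (W - (a \<union> b)) + \<tau> b"
    using adm_ab adm_b by (metis tau_add admissible_tm_A)
  then show ?thesis
    using inA inB by (simp add: tau_ext_def a_def b_def vimage_Un)
qed

lemma tau_ext_add:
  assumes A: "A \<in> tm_A W_hat" and B: "B \<in> tm_A W_hat" and AB: "A \<union> B \<in> tm_A W_hat"
    and disj: "A \<inter> B = {}"
  shows "tau_ext (A \<union> B) = tau_ext A + tau_ext B"
proof -
  consider "None \<in> A" | "None \<in> B" | "None \<notin> A" "None \<notin> B" by blast
  then show ?thesis
  proof cases
    case 1 then show ?thesis using tau_ext_add_infinite[OF A B AB _ disj] by simp
  next
    case 2 then show ?thesis
      using tau_ext_add_infinite[OF B A _ _ ] AB disj by (simp add: Un_commute Int_commute)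
  next
    case 3
    have "\<tau> (Some -` A \<union> Some -` B) = \<tau> (Some -` A) + \<tau> (Some -` B)"
      using tm_A_W_hat_core(1)[OF A 3(1)] tm_A_W_hat_core(1)[OF B 3(2)]
        tm_A_W_hat_core(1)[OF AB] 3 disj
      by (intro tau_add admissible_tm_A) (auto simp: vimage_Un)
    with 3 show ?thesis by (simp add: tau_ext_def vimage_Un)
  qed
qed

text \<open>Monotonicity; the mixed case \<open>\<infinity> \<notin> A \<subseteq> B \<ni> \<infinity>\<close> is \<open>tau_disjoint_le\<close>.\<close>

lemma tau_ext_mono:
  assumes A: "A \<in> tm_A W_hat" and B: "B \<in> tm_A W_hat" and AB: "A \<subseteq> B"
  shows "tau_ext A \<le> tau_ext B"
proof -
  define a b where "a = Some -` A" and "b = Some -` B"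
  have ab: "a \<subseteq> b" using AB by (auto simp: a_def b_def)
  consider "None \<notin> B" | "None \<in> A" | "None \<notin> A" "None \<in> B" using AB by blast
  then show ?thesis
  proof cases
    case 1
    then have "None \<notin> A" using AB by blast
    with 1 have "\<tau> a \<le> \<tau> b"
      using tm_A_W_hat_core(1)[OF A] tm_A_W_hat_core(1)[OF B] ab
      by (intro tau_mono admissible_tm_A) (auto simp: a_def b_def)
    with 1 \<open>None \<notin> A\<close> show ?thesis by (simp add: tau_ext_def a_def b_def)
  next
    case 2
    then have "None \<in> B" using AB by blast
    with 2 have "\<tau> (W - b) \<le> \<tau> (W - a)"
      using tm_A_W_hat_core(2)[OF A] tm_A_W_hat_core(2)[OF B] ab
      by (intro tau_mono admissible_tm_A) (auto simp: a_def b_def)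
    with 2 \<open>None \<in> B\<close> show ?thesis by (simp add: tau_ext_def a_def b_def)
  next
    case 3
    then have "\<tau> a + \<tau> (W - b) \<le> \<tau> W"
      using tm_A_W_hat_core(1)[OF A] tm_A_W_hat_core(2)[OF B] ab
      by (intro tau_disjoint_le) (auto simp: a_def b_def)
    with 3 show ?thesis by (simp add: tau_ext_def a_def b_def)
  qed
qed

text \<open>Outer regularity of \<open>tau_ext\<close> on closed sets, from \<open>approx_by_open_above\<close> for sets
  \<open>Some ` K\<close> and from \<open>approx_by_compact_below\<close> applied to \<open>U\<close> for sets \<open>{\<infinity>} \<union> Some ` (W - U)\<close>.\<close>

lemma tau_ext_regular_K:
  assumes "A \<in> tm_K W_hat"
  shows "tau_ext A = Inf (tau_ext ` {B \<in> tm_O W_hat. A \<subseteq> B})"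
proof (rule real_Inf_eq_approx[symmetric])
  have closed: "closedin W_hat A" using assms tm_K_W_hat by blast
  then show "tau_ext ` {B \<in> tm_O W_hat. A \<subseteq> B} \<noteq> {}"
    using closedin_subset tm_O_W_hat by blast
  show "tau_ext A \<le> x" if "x \<in> tau_ext ` {B \<in> tm_O W_hat. A \<subseteq> B}" for x
    using that assms tau_ext_mono by (auto simp: tm_A_def)
  fix e :: real assume e: "e > 0"
  have "\<exists>B. openin W_hat B \<and> A \<subseteq> B \<and> tau_ext B < tau_ext A + e"
    using closed unfolding closedin_W_hat
  proof (elim disjE exE conjE)
    fix K assume K: "compactin X K" "K \<subseteq> W" and A: "A = Some ` K"
    obtain U where U: "openin X U" "K \<subseteq> U" "U \<subseteq> W" "\<tau> U < \<tau> K + e"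
      using approx_by_open_above[OF K e] .
    show ?thesis
      using U A by (intro exI[of _ "Some ` U"]) (auto simp: openin_W_hat tau_ext_Some)
  next
    fix U assume U: "openin X U" "U \<subseteq> W" and A: "A = insert None (Some ` (W - U))"
    obtain K where K: "compactin X K" "K \<subseteq> U" "\<tau> U - e < \<tau> K"
      using approx_by_compact_below[OF U e] .
    have "openin W_hat (insert None (Some ` (W - K)))"
      using K U(2) unfolding openin_W_hat by blast
    then show ?thesis
      using K U A by (intro exI[of _ "insert None (Some ` (W - K))"]) (auto simp: tau_ext_None)
  qed
  then show "\<exists>x\<in>tau_ext ` {B \<in> tm_O W_hat. A \<subseteq> B}. x < tau_ext A + e"
    by (auto simp: tm_O_W_hat)
qed

lemma tau_ext_regular_O:
  assumes "A \<in> tm_O W_hat"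
  shows "tau_ext A = Sup (tau_ext ` {C \<in> tm_K W_hat. C \<subseteq> A})"
proof (rule real_Sup_eq_approx[symmetric])
  show "tau_ext ` {C \<in> tm_K W_hat. C \<subseteq> A} \<noteq> {}"
    using tm_K_W_hat by blast
  show "x \<le> tau_ext A" if "x \<in> tau_ext ` {C \<in> tm_K W_hat. C \<subseteq> A}" for x
    using that assms tau_ext_mono by (auto simp: tm_A_def)
  fix e :: real assume e: "e > 0"
  have "\<exists>C. closedin W_hat C \<and> C \<subseteq> A \<and> tau_ext A - e < tau_ext C"
    using assms unfolding tm_O_W_hat openin_W_hat
  proof (elim disjE exE conjE)
    fix U assume U: "openin X U" "U \<subseteq> W" and A: "A = Some ` U"
    obtain K where K: "compactin X K" "K \<subseteq> U" "\<tau> U - e < \<tau> K"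
      using approx_by_compact_below[OF U e] .
    have "closedin W_hat (Some ` K)"
      using K U(2) unfolding closedin_W_hat by blast
    then show ?thesis
      using K A by (intro exI[of _ "Some ` K"]) (auto simp: tau_ext_Some)
  next
    fix K assume K: "compactin X K" "K \<subseteq> W" and A: "A = insert None (Some ` (W - K))"
    obtain U where U: "openin X U" "K \<subseteq> U" "U \<subseteq> W" "\<tau> U < \<tau> K + e"
      using approx_by_open_above[OF K e] .
    have "closedin W_hat (insert None (Some ` (W - U)))"
      using U unfolding closedin_W_hat by blast
    then show ?thesis
      using K U A by (intro exI[of _ "insert None (Some ` (W - U))"]) (auto simp: tau_ext_None)
  qed
  then show "\<exists>x\<in>tau_ext ` {C \<in> tm_K W_hat. C \<subseteq> A}. tau_ext A - e < x"
    by (auto simp: tm_K_W_hat)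
qed

lemma topological_measure_tau_ext: "topological_measure W_hat tau_ext"
  unfolding topological_measure_def
  by (intro conjI ballI impI)
    (simp_all add: tau_ext_nonneg tau_ext_add tau_ext_mono tau_ext_regular_K tau_ext_regular_O)

end

theorem lemma2p2:
  fixes X :: "'a topology" and \<tau> :: "'a set \<Rightarrow> real" and W :: "'a set"
  assumes "Hausdorff_space X" and "locally_compact_space X"
    and "topological_measure X \<tau>"
    and "W \<in> tm_O X"
  shows "topological_measure (opc X W) (tau_hat X W \<tau>)"
proof -
  interpret measure_on_open_set X \<tau> W
    using assms by unfold_locales
  show ?thesis
    using topological_measure_tau_ext tau_hat_eq_tau_ext by (rule topological_measure_cong)
qed

end
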